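(* Let $f$ be a Hamiltonian stationary torus. The real structure $\rho:\mathrm{Spec}\to\mathrm{Spec}$, $\rho(h)=\bar h$, induces the involutions $\rho:\mathbb C^2\to\mathbb C^2$, $(A,B)\mapsto(A,-B)$, and $\rho:\Gamma^*\to\Gamma^*$, $\delta\mapsto-\delta$ (i.e. $\overline{h^{A,B}}=h^{A,-B}$), so that $\rho(\Gamma^*_{A,B})=\Gamma^*_{A,-B}$, and the lines $\mathcal L$ are compatible with $\rho$, that is $$\rho^*\mathcal L_{A,\delta-B}:=\mathcal L_{A,-(\delta-B)}=\mathcal L_{A,\delta-B}\,j$$ for all $\delta\in\Gamma^*_{A,B}$.
   Context: Identify $\mathbb R^4$ with $\mathbb H$ and $\mathbb C$ with $\mathrm{span}_{\mathbb R}\{1,i\}$; $\langle\cdot,\cdot\rangle$ is the Euclidean inner product on $\mathbb C\cong\mathbb R^2$. $\Gamma\subset\mathbb C$ a lattice, $\Gamma^*$ its dual lattice. A Hamiltonian stationary torus is a $\Gamma$-periodic conformal immersion $f:\mathbb C\to\mathbb H$ with $df=e^{j\beta/2}dz\,g$, $dz=dx+i\,dy$, $g$ nowhere zero, $\beta(z)=2\pi\langle\beta_0,z\rangle$ with $0\ne\beta_0\in\Gamma^*$. Convention $*dz=i\,dz$; left normal $N=e^{j\beta}i$. $\alpha:\mathbb C\to\mathbb H$ is holomorphic if $*d\alpha=N\,d\alpha$; for a homomorphism $h:\Gamma\to\mathbb C_*$, $H^0_h$ denotes holomorphic $\alpha$ with $\alpha(z+\gamma)=\alpha(z)h(\gamma)$;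 $\mathrm{Spec}=\{h:H^0_h\ne0\}$. $h^{A,B}(\gamma)=e^{2\pi(\langle A,\gamma\rangle-i\langle B,\gamma\rangle)}$; $\Gamma^*_{A,B}=\{\delta\in\Gamma^*+\frac{\beta_0}2:|\delta-B|^2-|A|^2=\frac{|\beta_0|^2}4,\ \langle\delta-B,A\rangle=0\}$; $e_\delta(z)=e^{2\pi i\langle\delta,z\rangle}$; $\lambda_{A,\delta-B}=\frac2{\beta_0}(\delta-iA-B)$. For $\delta\in\Gamma^*_{A,B}$, $\mathcal L_{A,\delta-B}$ is the complex line (right $\mathbb C$-span) in $H^0_{h^{A,B}}$ spanned by the monochromatic holomorphic section $\alpha^{A,B}_\delta=e^{j\beta/2}(1-k\lambda_{A,\delta-B})e_{\delta-B}e^{2\pi\langle A,\cdot\rangle}$. *)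

theory Defs
  imports "HOL-Analysis.Analysis"
begin

text \<open>We model the quaternions H as pairs of complex numbers: the pair (a, b)
  represents the quaternion a + j b, where a, b lie in C = span_R{1,i}.
  In this model right multiplication by a complex number c is componentwise,
  and the vector space / norm structure is the Euclidean one of R^4.
  Using j z = conj z j one gets the Hamilton product below.\<close>

type_synonym quat = "complex \<times> complex"

definition qmul :: "quat \<Rightarrow> quat \<Rightarrow> quat" (infixl "**\<^sub>H" 70) where
  "p **\<^sub>H q = (fst p * fst q - cnj (snd p) * snd q, cnj (fst p) * snd q + snd p * fst q)"

definition qC :: "complex \<Rightarrow> quat" where
  "qC c = (c, 0)"

definition q1 :: quat where "q1 = qC 1"
definition qi :: quat where "qi = qC \<i>"
definition qj :: quat where "qj = (0, 1)"
definition qk :: quat where "qk = qi **\<^sub>H qj"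

definition qexpj :: "real \<Rightarrow> quat" where
  "qexpj t = (complex_of_real (cos t), complex_of_real (sin t))"

definition lattice_of :: "complex \<Rightarrow> complex \<Rightarrow> complex set" where
  "lattice_of w1 w2 = {of_int m * w1 + of_int n * w2 | m n. True}"

definition is_lattice :: "complex set \<Rightarrow> bool" where
  "is_lattice \<Gamma> \<longleftrightarrow> (\<exists>w1 w2. Im (cnj w1 * w2) \<noteq> 0 \<and> \<Gamma> = lattice_of w1 w2)"

definition dual_lattice :: "complex set \<Rightarrow> complex set" where
  "dual_lattice \<Gamma> = {\<delta>. \<forall>\<gamma>\<in>\<Gamma>. \<delta> \<bullet> \<gamma> \<in> \<int>}"

definition beta_fun :: "complex \<Rightarrow> complex \<Rightarrow> real" where
  "beta_fun \<beta>0 z = 2 * pi * (\<beta>0 \<bullet> z)"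

text \<open>df = e^{j beta/2} dz g, i.e. df_z(v) = e^{j beta(z)/2} v g(z) for v in C.\<close>
definition ham_stat_torus ::
  "complex set \<Rightarrow> complex \<Rightarrow> (complex \<Rightarrow> quat) \<Rightarrow> (complex \<Rightarrow> quat) \<Rightarrow> bool" where
  "ham_stat_torus \<Gamma> \<beta>0 f g \<longleftrightarrow>
     is_lattice \<Gamma> \<and> \<beta>0 \<in> dual_lattice \<Gamma> \<and> \<beta>0 \<noteq> 0 \<and>
     (\<forall>z. g z \<noteq> 0) \<and>
     (\<forall>z. \<forall>\<gamma>\<in>\<Gamma>. f (z + \<gamma>) = f z) \<and>
     (\<forall>z. (f has_derivative (\<lambda>v. qexpj (beta_fun \<beta>0 z / 2) **\<^sub>H qC v **\<^sub>H g z)) (at z))"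

definition left_normal :: "complex \<Rightarrow> complex \<Rightarrow> quat" where
  "left_normal \<beta>0 z = qexpj (beta_fun \<beta>0 z) **\<^sub>H qi"

text \<open>Holomorphic: *d alpha = N d alpha, with ( *omega)(v) = omega(i v) (from *dz = i dz).\<close>
definition holomorphic_sec :: "complex \<Rightarrow> (complex \<Rightarrow> quat) \<Rightarrow> bool" where
  "holomorphic_sec \<beta>0 \<alpha> \<longleftrightarrow>
     (\<forall>z. \<exists>D. (\<alpha> has_derivative D) (at z) \<and>
            (\<forall>v. D (\<i> * v) = left_normal \<beta>0 z **\<^sub>H D v))"

definition is_hom :: "complex set \<Rightarrow> (complex \<Rightarrow> complex) \<Rightarrow> bool" where
  "is_hom \<Gamma> h \<longleftrightarrow> (\<forall>\<gamma>\<in>\<Gamma>. h \<gamma> \<noteq> 0) \<and> (\<forall>\<gamma>1\<in>\<Gamma>. \<forall>\<gamma>2\<in>\<Gamma>. h (\<gamma>1 + \<gamma>2) = h \<gamma>1 * h \<gamma>2)"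

definition H0 :: "complex set \<Rightarrow> complex \<Rightarrow> (complex \<Rightarrow> complex) \<Rightarrow> (complex \<Rightarrow> quat) set" where
  "H0 \<Gamma> \<beta>0 h = {\<alpha>. holomorphic_sec \<beta>0 \<alpha> \<and>
                    (\<forall>z. \<forall>\<gamma>\<in>\<Gamma>. \<alpha> (z + \<gamma>) = \<alpha> z **\<^sub>H qC (h \<gamma>))}"

definition Spec :: "complex set \<Rightarrow> complex \<Rightarrow> (complex \<Rightarrow> complex) set" where
  "Spec \<Gamma> \<beta>0 = {h. is_hom \<Gamma> h \<and> (\<exists>\<alpha>\<in>H0 \<Gamma> \<beta>0 h. \<alpha> \<noteq> (\<lambda>_. 0))}"

definition hAB :: "complex \<Rightarrow> complex \<Rightarrow> complex \<Rightarrow> complex" where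
  "hAB A B \<gamma> = exp (complex_of_real (2 * pi) * (complex_of_real (A \<bullet> \<gamma>) - \<i> * complex_of_real (B \<bullet> \<gamma>)))"

definition GammaAB :: "complex set \<Rightarrow> complex \<Rightarrow> complex \<Rightarrow> complex \<Rightarrow> complex set" where
  "GammaAB \<Gamma> \<beta>0 A B = {\<delta>. \<delta> \<in> (\<lambda>d. d + \<beta>0 / 2) ` dual_lattice \<Gamma> \<and>
       (cmod (\<delta> - B))\<^sup>2 - (cmod A)\<^sup>2 = (cmod \<beta>0)\<^sup>2 / 4 \<and> (\<delta> - B) \<bullet> A = 0}"

definition e_fun :: "complex \<Rightarrow> complex \<Rightarrow> complex" where
  "e_fun d z = exp (\<i> * complex_of_real (2 * pi * (d \<bullet> z)))"

text \<open>lambda_{A,d} = (2/beta0)(d - i A); for d = delta - B this is (2/beta0)(delta - iA - B).\<close>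
definition lam :: "complex \<Rightarrow> complex \<Rightarrow> complex \<Rightarrow> complex" where
  "lam \<beta>0 A d = 2 / \<beta>0 * (d - \<i> * A)"

text \<open>alpha^{A,B}_delta with d = delta - B:
  e^{j beta/2} (1 - k lambda_{A,d}) e_d e^{2 pi <A,.>}.\<close>
definition mono_sec :: "complex \<Rightarrow> complex \<Rightarrow> complex \<Rightarrow> complex \<Rightarrow> quat" where
  "mono_sec \<beta>0 A d z =
     qexpj (beta_fun \<beta>0 z / 2) **\<^sub>H (q1 - qk **\<^sub>H qC (lam \<beta>0 A d))
       **\<^sub>H qC (e_fun d z * complex_of_real (exp (2 * pi * (A \<bullet> z))))"

definition line_L :: "complex \<Rightarrow> complex \<Rightarrow> complex \<Rightarrow> (complex \<Rightarrow> quat) set" where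
  "line_L \<beta>0 A d = {(\<lambda>z. mono_sec \<beta>0 A d z **\<^sub>H qC c) | c. True}"

end

theory Submission
  imports Defs
begin

text \<open>Right multiplication by j is real linear, injective, associates with the left action
  of the normal N and turns right multiplication by c into right multiplication by cnj c.
  Hence it maps H0 for h to H0 for cnj h, which gives the real structure on the spectrum.
  For the monochromatic sections, the quadric conditions defining Gamma*_{A,B} give
  lambda_{A,-d} cnj lambda_{A,d} = -1 for d = delta - B, and this identity turns
  alpha_d j into alpha_{-d} times a nonzero complex number.\<close>

lemma qmul_assoc: "(p **\<^sub>H q) **\<^sub>H r = p **\<^sub>H (q **\<^sub>H r)"
  by (cases p; cases q; cases r) (simp add: qmul_def algebra_simps)

lemma qC_mult_qC: "qC a **\<^sub>H qC b = qC (a * b)"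
  by (simp add: qmul_def qC_def)

lemma qC_mult_qj: "qC c **\<^sub>H qj = qj **\<^sub>H qC (cnj c)"
  by (simp add: qmul_def qC_def qj_def)

lemma qmul_qC_qj: "p **\<^sub>H qC c **\<^sub>H qj = p **\<^sub>H qj **\<^sub>H qC (cnj c)"
  by (simp only: qmul_assoc qC_mult_qj)

lemma mult_qj_eq: "p **\<^sub>H qj = (- cnj (snd p), cnj (fst p))"
  by (cases p) (simp add: qmul_def qj_def)

lemma bounded_linear_mult_qj: "bounded_linear (\<lambda>p::quat. p **\<^sub>H qj)"
  unfolding mult_qj_eq
  by (intro bounded_linear_Pair bounded_linear_minus
      bounded_linear_compose[OF bounded_linear_cnj] bounded_linear_fst bounded_linear_snd)

lemma mult_qj_eq_0_iff: "p **\<^sub>H qj = 0 \<longleftrightarrow> p = 0"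
  by (cases p) (auto simp add: mult_qj_eq zero_prod_def)

lemma holomorphic_sec_mult_qj:
  assumes "holomorphic_sec \<beta>0 \<alpha>"
  shows "holomorphic_sec \<beta>0 (\<lambda>z. \<alpha> z **\<^sub>H qj)"
  unfolding holomorphic_sec_def
proof
  fix z
  from assms obtain D where D: "(\<alpha> has_derivative D) (at z)"
    and N: "\<forall>v. D (\<i> * v) = left_normal \<beta>0 z **\<^sub>H D v"
    by (auto simp: holomorphic_sec_def)
  have "((\<lambda>z. \<alpha> z **\<^sub>H qj) has_derivative (\<lambda>v. D v **\<^sub>H qj)) (at z)"
    using bounded_linear.has_derivative[OF bounded_linear_mult_qj D] .
  moreover have "\<forall>v. D (\<i> * v) **\<^sub>H qj = left_normal \<beta>0 z **\<^sub>H (D v **\<^sub>H qj)"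
    using N by (simp add: qmul_assoc)
  ultimately show "\<exists>D. ((\<lambda>z. \<alpha> z **\<^sub>H qj) has_derivative D) (at z) \<and>
      (\<forall>v. D (\<i> * v) = left_normal \<beta>0 z **\<^sub>H D v)"
    by blast
qed

lemma H0_mult_qj:
  assumes "\<alpha> \<in> H0 \<Gamma> \<beta>0 h"
  shows "(\<lambda>z. \<alpha> z **\<^sub>H qj) \<in> H0 \<Gamma> \<beta>0 (\<lambda>\<gamma>. cnj (h \<gamma>))"
  using assms holomorphic_sec_mult_qj by (simp add: H0_def qmul_qC_qj)

lemma is_hom_cnj: "is_hom \<Gamma> h \<Longrightarrow> is_hom \<Gamma> (\<lambda>\<gamma>. cnj (h \<gamma>))"
  by (simp add: is_hom_def)

lemma Spec_cnj:
  assumes "h \<in> Spec \<Gamma> \<beta>0"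
  shows "(\<lambda>\<gamma>. cnj (h \<gamma>)) \<in> Spec \<Gamma> \<beta>0"
proof -
  obtain \<alpha> where hom: "is_hom \<Gamma> h" and \<alpha>: "\<alpha> \<in> H0 \<Gamma> \<beta>0 h" and nonzero: "\<alpha> \<noteq> (\<lambda>_. 0)"
    using assms by (auto simp: Spec_def)
  have "(\<lambda>z. \<alpha> z **\<^sub>H qj) \<noteq> (\<lambda>_. 0)"
    using nonzero by (auto simp: fun_eq_iff mult_qj_eq_0_iff)
  with is_hom_cnj[OF hom] H0_mult_qj[OF \<alpha>] show ?thesis
    unfolding Spec_def by blast
qed

lemma cnj_hAB: "cnj (hAB A B \<gamma>) = hAB A (- B) \<gamma>"
  by (simp add: hAB_def exp_cnj inner_minus_left)

lemma uminus_in_dual_lattice: "d \<in> dual_lattice \<Gamma> \<Longrightarrow> - d \<in> dual_lattice \<Gamma>"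
  by (simp add: dual_lattice_def)

lemma add_in_dual_lattice:
  "a \<in> dual_lattice \<Gamma> \<Longrightarrow> b \<in> dual_lattice \<Gamma> \<Longrightarrow> a + b \<in> dual_lattice \<Gamma>"
  by (simp add: dual_lattice_def inner_add_left)

lemma uminus_image_closed_eq:
  fixes S T :: "'a :: group_add set"
  assumes "\<And>x. x \<in> S \<Longrightarrow> - x \<in> T" "\<And>x. x \<in> T \<Longrightarrow> - x \<in> S"
  shows "uminus ` S = T"
proof
  show "uminus ` S \<subseteq> T"
    using assms(1) by blast
  show "T \<subseteq> uminus ` S"
  proof
    fix x assume "x \<in> T"
    then show "x \<in> uminus ` S"
      using assms(2) by (intro rev_image_eqI[of "- x"]) simp_all
  qed
qed

lemma uminus_image_dual_lattice: "uminus ` dual_lattice \<Gamma> = dual_lattice \<Gamma>"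
  by (rule uminus_image_closed_eq) (simp_all add: uminus_in_dual_lattice)

lemma uminus_in_GammaAB:
  assumes "\<beta>0 \<in> dual_lattice \<Gamma>" "\<delta> \<in> GammaAB \<Gamma> \<beta>0 A B"
  shows "- \<delta> \<in> GammaAB \<Gamma> \<beta>0 A (- B)"
proof -
  obtain d where d: "d \<in> dual_lattice \<Gamma>" "\<delta> = d + \<beta>0 / 2"
    using assms(2) by (auto simp: GammaAB_def)
  have "- d - \<beta>0 \<in> dual_lattice \<Gamma>"
    using add_in_dual_lattice[OF uminus_in_dual_lattice[OF d(1)] uminus_in_dual_lattice[OF assms(1)]]
    by simp
  moreover have "- \<delta> = (- d - \<beta>0) + \<beta>0 / 2"
    using d(2) by simp
  moreover have "(cmod (- \<delta> - - B))\<^sup>2 - (cmod A)\<^sup>2 = (cmod \<beta>0)\<^sup>2 / 4"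
    "(- \<delta> - - B) \<bullet> A = 0"
    using assms(2) by (simp_all add: GammaAB_def norm_minus_commute inner_minus_left inner_diff_left)
  ultimately show ?thesis
    unfolding GammaAB_def by blast
qed

lemma uminus_image_GammaAB:
  assumes "\<beta>0 \<in> dual_lattice \<Gamma>"
  shows "uminus ` GammaAB \<Gamma> \<beta>0 A B = GammaAB \<Gamma> \<beta>0 A (- B)"
  using uminus_in_GammaAB[OF assms, of _ A B] uminus_in_GammaAB[OF assms, of _ A "- B"]
  by (intro uminus_image_closed_eq) simp_all

lemma lam_uminus_mult_cnj_lam:
  assumes "\<beta>0 \<noteq> 0" "(cmod d)\<^sup>2 - (cmod A)\<^sup>2 = (cmod \<beta>0)\<^sup>2 / 4" "d \<bullet> A = 0"
  shows "lam \<beta>0 A (- d) * cnj (lam \<beta>0 A d) = -1"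
proof -
  obtain a b p q u v where d: "d = Complex a b" and A: "A = Complex p q" and \<beta>: "\<beta>0 = Complex u v"
    by (meson complex.exhaust_sel)
  have "u\<^sup>2 + v\<^sup>2 \<noteq> 0"
    using assms(1) \<beta> by (simp add: complex_eq_iff)
  moreover have "a\<^sup>2 + b\<^sup>2 - (p\<^sup>2 + q\<^sup>2) = (u\<^sup>2 + v\<^sup>2) / 4"
    using assms(2) d A \<beta> by (simp add: cmod_def)
  moreover have "a * p + b * q = 0"
    using assms(3) d A by (simp add: inner_complex_def)
  ultimately show ?thesis
    unfolding lam_def d A \<beta> by (simp add: complex_eq_iff field_simps Complex_eq power2_eq_square)
qed

lemma one_minus_qk_mult_qj:
  assumes "l' * cnj l = -1"
  shows "(q1 - qk **\<^sub>H qC l) **\<^sub>H qj = (q1 - qk **\<^sub>H qC l') **\<^sub>H qC (\<i> * cnj l)"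
  using assms by (simp add: qmul_def q1_def qk_def qi_def qj_def qC_def algebra_simps)

lemma mono_sec_mult_qj:
  assumes "lam \<beta>0 A (- d) * cnj (lam \<beta>0 A d) = -1"
  shows "mono_sec \<beta>0 A d z **\<^sub>H qj = mono_sec \<beta>0 A (- d) z **\<^sub>H qC (\<i> * cnj (lam \<beta>0 A d))"
proof -
  let ?E = "qexpj (beta_fun \<beta>0 z / 2)"
  let ?r = "complex_of_real (exp (2 * pi * (A \<bullet> z)))"
  let ?c = "\<i> * cnj (lam \<beta>0 A d)"
  have cnj_w: "cnj (e_fun d z * ?r) = e_fun (- d) z * ?r"
    by (simp add: e_fun_def exp_cnj inner_minus_left)
  have "mono_sec \<beta>0 A d z **\<^sub>H qj
      = ?E **\<^sub>H ((q1 - qk **\<^sub>H qC (lam \<beta>0 A d)) **\<^sub>H qj) **\<^sub>H qC (e_fun (- d) z * ?r)"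
    unfolding mono_sec_def by (simp only: qC_mult_qj cnj_w qmul_assoc)
  also have "\<dots> = ?E **\<^sub>H (q1 - qk **\<^sub>H qC (lam \<beta>0 A (- d))) **\<^sub>H qC (e_fun (- d) z * ?r * ?c)"
    by (simp only: one_minus_qk_mult_qj[OF assms] qmul_assoc qC_mult_qC mult.commute)
  also have "\<dots> = mono_sec \<beta>0 A (- d) z **\<^sub>H qC ?c"
    unfolding mono_sec_def by (simp only: qmul_assoc qC_mult_qC)
  finally show ?thesis .
qed

lemma right_span_mult_qj:
  assumes "\<And>z. \<phi> z **\<^sub>H qj = \<psi> z **\<^sub>H qC c0" "c0 \<noteq> 0"
  shows "{(\<lambda>z. \<psi> z **\<^sub>H qC c) | c. True}
       = (\<lambda>\<alpha> z. \<alpha> z **\<^sub>H qj) ` {(\<lambda>z. \<phi> z **\<^sub>H qC c) | c. True}"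
proof -
  have "\<phi> z **\<^sub>H qC c **\<^sub>H qj = \<phi> z **\<^sub>H qj **\<^sub>H qC (cnj c)" for z c
    by (rule qmul_qC_qj)
  also have "\<phi> z **\<^sub>H qj **\<^sub>H qC (cnj c) = \<psi> z **\<^sub>H qC (c0 * cnj c)" for z c
    by (simp only: assms(1) qmul_assoc qC_mult_qC)
  finally have image_eq: "(\<lambda>z. \<phi> z **\<^sub>H qC c **\<^sub>H qj) = (\<lambda>z. \<psi> z **\<^sub>H qC (c0 * cnj c))" for c
    by (intro ext)
  have "c0 * cnj (cnj (c / c0)) = c" for c
    using assms(2) by simp
  then have "{(\<lambda>z. \<psi> z **\<^sub>H qC c) | c. True} = {(\<lambda>z. \<psi> z **\<^sub>H qC (c0 * cnj c)) | c. True}"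
    by (metis (no_types))
  also have "\<dots> = {(\<lambda>z. \<phi> z **\<^sub>H qC c **\<^sub>H qj) | c. True}"
    by (simp only: image_eq)
  also have "\<dots> = (\<lambda>\<alpha> z. \<alpha> z **\<^sub>H qj) ` {(\<lambda>z. \<phi> z **\<^sub>H qC c) | c. True}"
    unfolding setcompr_eq_image image_image by (rule refl)
  finally show ?thesis .
qed

lemma line_L_uminus:
  assumes "lam \<beta>0 A (- d) * cnj (lam \<beta>0 A d) = -1"
  shows "line_L \<beta>0 A (- d) = (\<lambda>\<alpha> z. \<alpha> z **\<^sub>H qj) ` line_L \<beta>0 A d"
  unfolding line_L_def
proof (rule right_span_mult_qj)
  show "mono_sec \<beta>0 A d z **\<^sub>H qj = mono_sec \<beta>0 A (- d) z **\<^sub>H qC (\<i> * cnj (lam \<beta>0 A d))" for z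
    using mono_sec_mult_qj[OF assms] .
  show "\<i> * cnj (lam \<beta>0 A d) \<noteq> 0"
    using assms by auto
qed

theorem theorem2p11:
  fixes \<Gamma> :: "complex set" and \<beta>0 :: complex
    and f g :: "complex \<Rightarrow> quat"
  assumes "ham_stat_torus \<Gamma> \<beta>0 f g"
  shows "(\<forall>h\<in>Spec \<Gamma> \<beta>0. (\<lambda>\<gamma>. cnj (h \<gamma>)) \<in> Spec \<Gamma> \<beta>0)
    \<and> uminus ` dual_lattice \<Gamma> = dual_lattice \<Gamma>
    \<and> (\<forall>A B. (\<forall>\<gamma>. cnj (hAB A B \<gamma>) = hAB A (- B) \<gamma>)
         \<and> uminus ` GammaAB \<Gamma> \<beta>0 A B = GammaAB \<Gamma> \<beta>0 A (- B)
         \<and> (\<forall>\<delta>\<in>GammaAB \<Gamma> \<beta>0 A B.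
              line_L \<beta>0 A (- (\<delta> - B)) = (\<lambda>\<alpha> z. \<alpha> z **\<^sub>H qj) ` line_L \<beta>0 A (\<delta> - B)))"
proof -
  have \<beta>0: "\<beta>0 \<in> dual_lattice \<Gamma>" "\<beta>0 \<noteq> 0"
    using assms by (auto simp: ham_stat_torus_def)
  have lines: "line_L \<beta>0 A (- (\<delta> - B)) = (\<lambda>\<alpha> z. \<alpha> z **\<^sub>H qj) ` line_L \<beta>0 A (\<delta> - B)"
    if "\<delta> \<in> GammaAB \<Gamma> \<beta>0 A B" for A B \<delta>
    using that \<beta>0(2)
    by (intro line_L_uminus lam_uminus_mult_cnj_lam) (auto simp: GammaAB_def)
  show ?thesis
    by (intro conjI allI ballI Spec_cnj uminus_image_dual_lattice cnj_hAB
        uminus_image_GammaAB[OF \<beta>0(1)] lines)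
qed

end
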